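(* Let $n$ be an odd multiple of $3$. Then it is possible to place $n-2$ queens on $\mathbb{Z}_n^2$ without conflict.
   Context: Queens are placed on distinct fields of the torus board $\mathbb{Z}_n^2$. Two queens at distinct fields $(x,y),(x',y')$ are in conflict iff $x=x'$, or $y=y'$, or $x+y=x'+y'$, or $x-y=x'-y'$ in $\mathbb{Z}_n$. A placement is without conflict if no two queens are in conflict. *)

theory Defs
  imports Main
begin

text \<open>Fields of the torus board Z_n^2 are represented by pairs (x,y) with 0 <= x,y < n.
  Arithmetic in Z_n is expressed by congruences modulo n on the integers.\<close>

definition torus_board :: "nat \<Rightarrow> (int \<times> int) set" where
  "torus_board n = {0..<int n} \<times> {0..<int n}"

definition queens_conflict :: "nat \<Rightarrow> int \<times> int \<Rightarrow> int \<times> int \<Rightarrow> bool" where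
  "queens_conflict n p q \<longleftrightarrow>
     (case p of (x, y) \<Rightarrow> case q of (x', y') \<Rightarrow>
        x mod int n = x' mod int n \<or> y mod int n = y' mod int n \<or>
        (x + y) mod int n = (x' + y') mod int n \<or> (x - y) mod int n = (x' - y') mod int n)"

definition conflict_free :: "nat \<Rightarrow> (int \<times> int) set \<Rightarrow> bool" where
  "conflict_free n Q \<longleftrightarrow> Q \<subseteq> torus_board n \<and>
     (\<forall>p\<in>Q. \<forall>q\<in>Q. p \<noteq> q \<longrightarrow> \<not> queens_conflict n p q)"

end

theory Submission
  imports Defs
begin

text \<open>Write \<open>n = 6h + 3\<close>, leave the columns \<open>h\<close> and \<open>n - 1\<close> empty, and put the queen of
  column \<open>i\<close> on row \<open>2i + s(i)\<close>, where the step function \<open>s\<close> is \<open>0, -1, 0, 1\<close> on the column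
  blocks \<open>[0, h)\<close>, \<open>(h, 3h]\<close>, \<open>[3h + 1, 4h + 1]\<close>, \<open>[4h + 2, n - 1)\<close>. The diagonals and
  antidiagonals of the queens are then \<open>3i + s(i)\<close> and \<open>-(i + s(i))\<close>, so it suffices that
  \<open>v(i) = c i + s(i)\<close> is injective modulo \<open>n\<close> for \<open>c = 1, 2, 3\<close> (without \<open>s\<close> this fails for
  \<open>c = 3\<close>, as \<open>3\<close> divides \<open>n\<close>). Now \<open>v\<close> is strictly increasing with values in \<open>[0, c n)\<close>, so a
  collision means \<open>v(i) = v(j) + k n\<close> with \<open>0 < k < c\<close>. For \<open>c = 2\<close> this is excluded by
  parity (\<open>v(i)\<close> is odd exactly on the blocks where \<open>s(i) = \<plusminus>1\<close>), for \<open>c = 3\<close> by reduction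
  modulo \<open>3\<close> (which forces \<open>s(i) = s(j)\<close>), in each case together with the block bounds.\<close>

lemma conflict_free_graph:
  fixes r :: "int \<Rightarrow> int"
  assumes S: "S \<subseteq> {0..<int n}"
    and rows: "inj_on (\<lambda>i. r i mod int n) S"
    and diagonals: "inj_on (\<lambda>i. (i + r i) mod int n) S"
    and antidiagonals: "inj_on (\<lambda>i. (i - r i) mod int n) S"
  shows "conflict_free n ((\<lambda>i. (i, r i mod int n)) ` S)"
  unfolding conflict_free_def
proof (intro conjI ballI impI)
  show "(\<lambda>i. (i, r i mod int n)) ` S \<subseteq> torus_board n"
    using S by (auto simp: torus_board_def)
next
  fix p q
  assume "p \<in> (\<lambda>i. (i, r i mod int n)) ` S" "q \<in> (\<lambda>i. (i, r i mod int n)) ` S" "p \<noteq> q"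
  then obtain i j where i: "i \<in> S" and j: "j \<in> S" and "i \<noteq> j"
    and p: "p = (i, r i mod int n)" and q: "q = (j, r j mod int n)"
    by blast
  have "i mod int n \<noteq> j mod int n"
    using subsetD[OF S i] subsetD[OF S j] \<open>i \<noteq> j\<close> by simp
  moreover have "r i mod int n \<noteq> r j mod int n"
    using inj_onD[OF rows _ i j] \<open>i \<noteq> j\<close> by blast
  moreover have "(i + r i) mod int n \<noteq> (j + r j) mod int n"
    using inj_onD[OF diagonals _ i j] \<open>i \<noteq> j\<close> by blast
  moreover have "(i - r i) mod int n \<noteq> (j - r j) mod int n"
    using inj_onD[OF antidiagonals _ i j] \<open>i \<noteq> j\<close> by blast
  ultimately show "\<not> queens_conflict n p q"
    unfolding queens_conflict_def p q by (simp add: mod_add_right_eq mod_diff_right_eq)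
qed

lemma inj_on_mod_uminus:
  fixes f :: "'a \<Rightarrow> int"
  assumes "inj_on (\<lambda>i. f i mod m) S"
  shows "inj_on (\<lambda>i. (- f i) mod m) S"
proof (rule inj_onI)
  fix i j
  assume "i \<in> S" "j \<in> S" "(- f i) mod m = (- f j) mod m"
  then have "f i mod m = f j mod m"
    using mod_minus_cong[of "- f i" m "- f j"] by simp
  with assms \<open>i \<in> S\<close> \<open>j \<in> S\<close> show "i = j"
    by (auto dest: inj_onD)
qed

lemma mod_eq_imp_eq_add_multiple:
  fixes a b n c :: int
  assumes "a mod n = b mod n" "0 < n" "a < c * n" "0 \<le> b"
  obtains k where "a = b + k * n" "k < c"
proof
  have "a div n * n \<le> a"
    using div_mult_mod_eq[of a n] pos_mod_sign[OF \<open>0 < n\<close>, of a] by linarith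
  then have "a div n * n < c * n"
    using assms(3) by linarith
  then have "a div n < c"
    using assms(2) by simp
  moreover have "0 \<le> b div n"
    using assms(2,4) by (simp add: pos_imp_zdiv_nonneg_iff)
  ultimately show "a div n - b div n < c"
    by linarith
  show "a = b + (a div n - b div n) * n"
    using assms(1) div_mult_mod_eq[of a n] div_mult_mod_eq[of b n]
    unfolding left_diff_distrib by linarith
qed

definition row_shift :: "int \<Rightarrow> int \<Rightarrow> int" where
  "row_shift h i = (if i < h then 0 else if i \<le> 3*h then -1 else if i \<le> 4*h + 1 then 0 else 1)"

definition queen_columns :: "int \<Rightarrow> int set" where
  "queen_columns h = {0..<6*h + 3} - {h, 6*h + 2}"

lemma card_queen_columns:
  assumes "0 \<le> h"
  shows "int (card (queen_columns h)) = 6*h + 1"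
proof -
  have "card (queen_columns h) = card {0..<6*h + 3} - card {h, 6*h + 2}"
    unfolding queen_columns_def using assms by (intro card_Diff_subset) auto
  then show ?thesis
    using assms by simp
qed

lemma shifted_multiple_bounds:
  assumes "0 \<le> h" "c \<in> {1, 2, 3}" "i \<in> queen_columns h"
  shows "0 \<le> c*i + row_shift h i" "c*i + row_shift h i < c * (6*h + 3)"
  using assms by (auto simp: queen_columns_def row_shift_def)

lemma shifted_multiple_strict_mono:
  assumes "0 \<le> h" "c \<in> {1, 2, 3}" "i \<in> queen_columns h" "j \<in> queen_columns h" "j < i"
  shows "c*j + row_shift h j < c*i + row_shift h i"
  using assms by (auto simp: queen_columns_def row_shift_def)

lemma shifted_multiple_no_wraparound:
  assumes "0 \<le> h" "i \<in> queen_columns h" "j \<in> queen_columns h" "j < i"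
    and "(c, k) \<in> {(2, 1), (3, 1), (3, 2)}"
  shows "c*i + row_shift h i \<noteq> c*j + row_shift h j + k * (6*h + 3)"
  using assms by (auto simp: queen_columns_def row_shift_def split: if_splits) presburger+

lemma shifted_multiple_mod_neq:
  assumes h: "0 \<le> h" and c: "c \<in> {1, 2, 3}"
    and i: "i \<in> queen_columns h" and j: "j \<in> queen_columns h" and "j < i"
  shows "(c*i + row_shift h i) mod (6*h + 3) \<noteq> (c*j + row_shift h j) mod (6*h + 3)"
proof
  assume "(c*i + row_shift h i) mod (6*h + 3) = (c*j + row_shift h j) mod (6*h + 3)"
  then obtain k where k: "c*i + row_shift h i = c*j + row_shift h j + k * (6*h + 3)" "k < c"
    by (rule mod_eq_imp_eq_add_multiple)
      (use h shifted_multiple_bounds[OF h c i] shifted_multiple_bounds[OF h c j] in auto)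
  have "0 < k * (6*h + 3)"
    using k(1) shifted_multiple_strict_mono[OF h c i j \<open>j < i\<close>] by linarith
  then have "0 < k"
    using h by (simp add: zero_less_mult_iff)
  then have "(c, k) \<in> {(2, 1), (3, 1), (3, 2)}"
    using c \<open>k < c\<close> by auto
  then show False
    using shifted_multiple_no_wraparound[OF h i j \<open>j < i\<close>] k(1) by blast
qed

lemma inj_on_shifted_multiple:
  assumes "0 \<le> h" "c \<in> {1, 2, 3}"
  shows "inj_on (\<lambda>i. (c*i + row_shift h i) mod (6*h + 3)) (queen_columns h)"
proof (rule inj_onI)
  fix i j
  assume i: "i \<in> queen_columns h" and j: "j \<in> queen_columns h"
    and eq: "(c*i + row_shift h i) mod (6*h + 3) = (c*j + row_shift h j) mod (6*h + 3)"
  show "i = j"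
  proof (rule linorder_cases)
    assume "i = j"
    then show ?thesis .
  next
    assume "j < i"
    then show ?thesis
      using shifted_multiple_mod_neq[OF assms i j] eq by blast
  next
    assume "i < j"
    then show ?thesis
      using shifted_multiple_mod_neq[OF assms j i] eq by simp
  qed
qed

lemma conflict_free_shifted_placement:
  assumes "0 \<le> h" and n: "int n = 6*h + 3"
  shows "conflict_free n ((\<lambda>i. (i, (2*i + row_shift h i) mod int n)) ` queen_columns h)"
proof (rule conflict_free_graph)
  show "queen_columns h \<subseteq> {0..<int n}"
    by (auto simp: queen_columns_def n)
  show "inj_on (\<lambda>i. (2*i + row_shift h i) mod int n) (queen_columns h)"
    unfolding n by (rule inj_on_shifted_multiple) (use assms(1) in simp_all)
  have "i + (2*i + row_shift h i) = 3*i + row_shift h i" for i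
    by simp
  then show "inj_on (\<lambda>i. (i + (2*i + row_shift h i)) mod int n) (queen_columns h)"
    using inj_on_shifted_multiple[OF assms(1), of 3] by (simp only: n) simp
  have "i - (2*i + row_shift h i) = - (1*i + row_shift h i)" for i
    by simp
  then show "inj_on (\<lambda>i. (i - (2*i + row_shift h i)) mod int n) (queen_columns h)"
    using inj_on_mod_uminus[OF inj_on_shifted_multiple[OF assms(1), of 1]] by (simp only: n) simp
qed

theorem lemma3:
  fixes n :: nat
  assumes "odd n" and "3 dvd n"
  shows "\<exists>Q. conflict_free n Q \<and> card Q = n - 2"
proof -
  define h where "h = int (n div 6)"
  have "0 \<le> h" and n: "int n = 6*h + 3"
    using assms unfolding h_def by presburger+
  have "card ((\<lambda>i. (i, (2*i + row_shift h i) mod int n)) ` queen_columns h) = n - 2"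
    using card_queen_columns[OF \<open>0 \<le> h\<close>] n by (simp add: card_image inj_on_def)
  with conflict_free_shifted_placement[OF \<open>0 \<le> h\<close> n] show ?thesis
    by blast
qed

end
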